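(* Let $\mathcal{F}=C_1\wedge\dots\wedge C_m\sim\mathcal{F}(m,n,d)$ and define the $2^n\times m$ matrix $M$ whose rows are indexed by assignments $\alpha\in\{0,1\}^n$ and columns by clause indices $i\in[m]$, with $M[\alpha,i]=1$ if the $i$th clause is not satisfied by $\alpha$ and $M[\alpha,i]=0$ otherwise. For any $c>2/\log e$, if $m\ge c\,2^d n^2/d$, then the rows of $M$ are pairwise distinct with high probability.
   Context: $\log$ is base 2. $\mathcal{F}(m,n,d)$: random $d$-CNF on $n$ variables with $m$ clauses sampled independently and uniformly with replacement from the $\binom{n}{d}2^d$ clauses on $d$ distinct variables. "With high probability" means with probability tending to $1$ as $n\to\infty$. *)

theory Defs
  imports "HOL-Probability.Probability"
begin

text \<open>A literal is a pair (v, b): variable v with polarity b (b = True: positive literal x_v,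
  b = False: negative literal not x_v). A clause is a set of literals.\<close>
type_synonym clause = "(nat \<times> bool) set"

definition clauses :: "nat \<Rightarrow> nat \<Rightarrow> clause set" where
  "clauses n d = {C. C \<subseteq> {..<n} \<times> UNIV \<and> finite C \<and> card C = d \<and> inj_on fst C}"

text \<open>F(m,n,d): m clauses sampled independently and uniformly with replacement;
  the formula is the function i \<mapsto> C_i on {..<m}.\<close>
definition random_cnf :: "nat \<Rightarrow> nat \<Rightarrow> nat \<Rightarrow> (nat \<Rightarrow> clause) pmf" where
  "random_cnf m n d = Pi_pmf {..<m} {} (\<lambda>_. pmf_of_set (clauses n d))"

definition assignments :: "nat \<Rightarrow> (nat \<Rightarrow> bool) set" where
  "assignments n = {..<n} \<rightarrow>\<^sub>E (UNIV :: bool set)"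

definition satisfies :: "(nat \<Rightarrow> bool) \<Rightarrow> clause \<Rightarrow> bool" where
  "satisfies \<alpha> C \<longleftrightarrow> (\<exists>(v, b) \<in> C. \<alpha> v = b)"

definition unsat_matrix :: "(nat \<Rightarrow> clause) \<Rightarrow> (nat \<Rightarrow> bool) \<Rightarrow> nat \<Rightarrow> nat" where
  "unsat_matrix F \<alpha> i = (if satisfies \<alpha> (F i) then 0 else 1)"

definition rows_distinct :: "nat \<Rightarrow> nat \<Rightarrow> (nat \<Rightarrow> clause) \<Rightarrow> bool" where
  "rows_distinct n m F \<longleftrightarrow>
     (\<forall>\<alpha>\<in>assignments n. \<forall>\<beta>\<in>assignments n. \<alpha> \<noteq> \<beta> \<longrightarrow>
        (\<lambda>i\<in>{..<m}. unsat_matrix F \<alpha> i) \<noteq> (\<lambda>i\<in>{..<m}. unsat_matrix F \<beta> i))"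

end

theory Submission
  imports Defs
begin

text \<open>Two distinct assignments \<alpha>, \<beta> differ at some variable v. Every clause on a d-set of
  variables containing v whose literals are all falsified by \<alpha> is satisfied by \<beta>; there are
  \<open>(n-1 choose d-1) = d/n \<cdot> (n choose d)\<close> such clauses, so a uniform clause separates \<alpha> from \<beta>
  with probability at least \<open>d / (n 2^d)\<close>. The rows of \<alpha> and \<beta> thus coincide with probability at
  most \<open>(1 - d/(n 2^d))^m \<le> exp (-c n)\<close>, and a union bound over the fewer than \<open>4^n\<close> pairs bounds
  the failure probability by \<open>(4 e^{-c})^n\<close>, which tends to 0 because \<open>c > 2 / log e = ln 4\<close>.\<close>

lemma finite_clauses: "finite (clauses n d)"
  by (rule finite_subset[of _ "Pow ({..<n} \<times> (UNIV :: bool set))"]) (auto simp: clauses_def)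

lemma card_clauses_le: "card (clauses n d) \<le> (n choose d) * 2 ^ d"
proof -
  let ?W = "{V. V \<subseteq> {..<n} \<and> card V = d}"
  let ?S = "Sigma ?W (\<lambda>V. V \<rightarrow>\<^sub>E (UNIV :: bool set))"
  let ?clause = "\<lambda>(V, g). (\<lambda>u. (u, g u)) ` V"
  have "clauses n d \<subseteq> ?clause ` ?S"
  proof
    fix C assume "C \<in> clauses n d"
    hence C: "C \<subseteq> {..<n} \<times> UNIV" "finite C" "card C = d" "inj_on fst C"
      by (auto simp: clauses_def)
    define g where "g = (\<lambda>u \<in> fst ` C. snd (the_inv_into C fst u))"
    have "fst ` C \<in> ?W" using C by (auto simp: card_image)
    moreover have "(fst p, g (fst p)) = p" if "p \<in> C" for p
      using C(4) that by (simp add: g_def the_inv_into_f_f)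
    hence "C = (\<lambda>u. (u, g u)) ` fst ` C"
      by (simp add: image_image)
    moreover have "g \<in> fst ` C \<rightarrow>\<^sub>E UNIV" by (simp add: g_def)
    ultimately show "C \<in> ?clause ` ?S" by (auto intro!: image_eqI[of _ _ "(fst ` C, g)"])
  qed
  moreover have fin: "finite ?S"
    by (auto intro!: finite_SigmaI finite_PiE dest: finite_subset[OF _ finite_lessThan])
  ultimately have "card (clauses n d) \<le> card (?clause ` ?S)"
    by (intro card_mono) auto
  also have "\<dots> \<le> card ?S"
    using fin by (rule card_image_le)
  also have "card ?S = (\<Sum>V\<in>?W. card (V \<rightarrow>\<^sub>E (UNIV :: bool set)))"
    by (subst card_SigmaI) (auto intro!: finite_PiE finite_subset[of _ "Pow {..<n}"]
        dest: finite_subset[OF _ finite_lessThan])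
  also have "\<dots> = (\<Sum>V\<in>?W. 2 ^ d)"
    by (intro sum.cong) (auto simp: card_PiE dest: finite_subset[OF _ finite_lessThan])
  also have "\<dots> = (n choose d) * 2 ^ d"
    using n_subsets[of "{..<n}" d] by simp
  finally show ?thesis .
qed

lemma card_subsets_containing:
  assumes "finite A" "v \<in> A" "1 \<le> d"
  shows "card {V. V \<subseteq> A \<and> card V = d \<and> v \<in> V} = (card A - 1) choose (d - 1)"
proof -
  let ?W = "{W. W \<subseteq> A - {v} \<and> card W = d - 1}"
  have "{V. V \<subseteq> A \<and> card V = d \<and> v \<in> V} = insert v ` ?W"
  proof (intro equalityI subsetI)
    fix V assume V: "V \<in> {V. V \<subseteq> A \<and> card V = d \<and> v \<in> V}"
    hence "V - {v} \<in> ?W" "V = insert v (V - {v})"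
      using assms(1) finite_subset by auto
    thus "V \<in> insert v ` ?W" by blast
  next
    fix V assume "V \<in> insert v ` ?W"
    then obtain W where W: "W \<subseteq> A - {v}" "card W = d - 1" "V = insert v W" by blast
    moreover have "finite W" "v \<notin> W" using W(1) assms(1) finite_subset by auto
    ultimately show "V \<in> {V. V \<subseteq> A \<and> card V = d \<and> v \<in> V}"
      using assms by auto
  qed
  moreover have "inj_on (insert v) ?W"
    by (rule inj_onI) (metis Diff_insert_absorb Diff_iff insertI1 mem_Collect_eq subsetD)
  ultimately have "card {V. V \<subseteq> A \<and> card V = d \<and> v \<in> V} = card ?W"
    by (simp add: card_image)
  also have "\<dots> = (card A - 1) choose (d - 1)"
    using n_subsets[of "A - {v}" "d - 1"] assms by simp
  finally show ?thesis .
qed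

lemma card_clauses_separating_ge:
  assumes "v < n" "\<alpha> v \<noteq> \<beta> v" "1 \<le> d"
  shows "(n - 1) choose (d - 1) \<le> card {C \<in> clauses n d. satisfies \<alpha> C \<noteq> satisfies \<beta> C}"
proof -
  let ?Vs = "{V. V \<subseteq> {..<n} \<and> card V = d \<and> v \<in> V}"
  let ?falsified = "\<lambda>V. (\<lambda>u. (u, \<not> \<alpha> u)) ` V"
  have "?falsified ` ?Vs \<subseteq> {C \<in> clauses n d. satisfies \<alpha> C \<noteq> satisfies \<beta> C}"
  proof
    fix C assume "C \<in> ?falsified ` ?Vs"
    then obtain V where V: "V \<in> ?Vs" "C = ?falsified V" by blast
    have "card C = d" using V by (simp add: card_image inj_on_def)
    moreover have "\<not> satisfies \<alpha> C" "satisfies \<beta> C"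
      using V assms(2) by (auto simp: satisfies_def)
    ultimately show "C \<in> {C \<in> clauses n d. satisfies \<alpha> C \<noteq> satisfies \<beta> C}"
      using V finite_subset[of V "{..<n}"] by (auto simp: clauses_def inj_on_def)
  qed
  moreover have inj: "inj_on ?falsified ?Vs"
  proof (rule inj_onI)
    fix V W assume "?falsified V = ?falsified W"
    hence "fst ` ?falsified V = fst ` ?falsified W" by simp
    thus "V = W" by (simp add: image_image)
  qed
  hence "card (?falsified ` ?Vs) = (n - 1) choose (d - 1)"
    using card_image[OF inj] card_subsets_containing[of "{..<n}" v d] assms by simp
  ultimately show ?thesis
    by (metis (no_types, lifting) card_mono finite_clauses finite_subset mem_Collect_eq subsetI)
qed

lemma prob_clause_agrees_le:
  assumes "\<alpha> \<in> assignments n" "\<beta> \<in> assignments n" "\<alpha> \<noteq> \<beta>" "1 \<le> d" "d \<le> n"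
  shows "measure_pmf.prob (pmf_of_set (clauses n d)) {C. satisfies \<alpha> C = satisfies \<beta> C}
           \<le> 1 - real d / (real n * 2 ^ d)"
proof -
  let ?S = "clauses n d"
  let ?Sep = "{C \<in> ?S. satisfies \<alpha> C \<noteq> satisfies \<beta> C}"
  obtain v where v: "v < n" "\<alpha> v \<noteq> \<beta> v"
  proof -
    obtain v where "\<alpha> v \<noteq> \<beta> v" using assms(3) by blast
    moreover have "v < n"
      using assms(1,2) calculation by (auto simp: assignments_def PiE_def extensional_def)
    ultimately show ?thesis using that by blast
  qed
  have sep: "(n - 1) choose (d - 1) \<le> card ?Sep"
    using card_clauses_separating_ge[of v n \<alpha> \<beta> d] v assms(4) by blast
  have "card ?Sep > 0"
    using sep assms(4,5) zero_less_binomial[of "d - 1" "n - 1"] by linarith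
  hence S_ne: "?S \<noteq> {}" by auto
  have "real d / (real n * 2 ^ d) = real ((n - 1) choose (d - 1)) / (real (n choose d) * 2 ^ d)"
    using times_binomial_minus1_eq[of d n] assms(4,5)
    by (simp add: field_simps flip: of_nat_mult)
  also have "\<dots> \<le> real (card ?Sep) / real (card ?S)"
  proof (rule frac_le)
    show "real ((n - 1) choose (d - 1)) \<le> real (card ?Sep)" using sep by simp
    show "0 < real (card ?S)" using S_ne finite_clauses[of n d] by (simp add: card_gt_0_iff)
    show "real (card ?S) \<le> real (n choose d) * 2 ^ d"
      using of_nat_mono[OF card_clauses_le[of n d]] by simp
  qed simp
  also have "\<dots> = measure_pmf.prob (pmf_of_set ?S) (- {C. satisfies \<alpha> C = satisfies \<beta> C})"
    using S_ne finite_clauses[of n d]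
    by (simp add: measure_pmf_of_set Int_def conj_commute)
  also have "\<dots> = 1 - measure_pmf.prob (pmf_of_set ?S) {C. satisfies \<alpha> C = satisfies \<beta> C}"
    using measure_pmf.prob_compl[of "{C. satisfies \<alpha> C = satisfies \<beta> C}" "pmf_of_set ?S"]
    by (simp add: Compl_eq_Diff_UNIV)
  finally show ?thesis by linarith
qed

lemma finite_assignments: "finite (assignments n)"
  by (simp add: assignments_def finite_PiE)

lemma card_assignments: "card (assignments n) = 2 ^ n"
  by (simp add: assignments_def card_PiE)

lemma prob_not_rows_distinct_le:
  assumes "1 \<le> d" "d \<le> n"
  shows "measure_pmf.prob (random_cnf m n d) {F. \<not> rows_distinct n m F}
           \<le> 4 ^ n * (1 - real d / (real n * 2 ^ d)) ^ m"
proof -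
  let ?P = "random_cnf m n d"
  let ?A = "assignments n"
  let ?pairs = "{p \<in> ?A \<times> ?A. fst p \<noteq> snd p}"
  let ?agree = "\<lambda>p. {C. satisfies (fst p) C = satisfies (snd p) C}"
  let ?rows_equal = "\<lambda>p. Pi {..<m} (\<lambda>_. ?agree p)"
  let ?b = "1 - real d / (real n * 2 ^ d)"
  have "{F. \<not> rows_distinct n m F} \<subseteq> \<Union> (?rows_equal ` ?pairs)"
  proof
    fix F assume "F \<in> {F. \<not> rows_distinct n m F}"
    then obtain \<alpha> \<beta> where "\<alpha> \<in> ?A" "\<beta> \<in> ?A" "\<alpha> \<noteq> \<beta>"
      and "(\<lambda>i\<in>{..<m}. unsat_matrix F \<alpha> i) = (\<lambda>i\<in>{..<m}. unsat_matrix F \<beta> i)"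
      unfolding rows_distinct_def by blast
    hence "\<forall>i<m. unsat_matrix F \<alpha> i = unsat_matrix F \<beta> i"
      by (metis lessThan_iff restrict_apply')
    with \<open>\<alpha> \<in> ?A\<close> \<open>\<beta> \<in> ?A\<close> \<open>\<alpha> \<noteq> \<beta>\<close>
    show "F \<in> \<Union> (?rows_equal ` ?pairs)"
      by (intro UN_I[of "(\<alpha>, \<beta>)"]) (auto simp: unsat_matrix_def split: if_splits)
  qed
  hence "measure_pmf.prob ?P {F. \<not> rows_distinct n m F}
           \<le> measure_pmf.prob ?P (\<Union> (?rows_equal ` ?pairs))"
    by (intro measure_pmf.finite_measure_mono) auto
  also have "\<dots> \<le> (\<Sum>p\<in>?pairs. measure_pmf.prob ?P (?rows_equal p))"
    using finite_assignments by (intro measure_pmf.finite_measure_subadditive_finite) auto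
  also have "\<dots> \<le> (\<Sum>p\<in>?pairs. ?b ^ m)"
  proof (rule sum_mono)
    fix p assume "p \<in> ?pairs"
    hence "measure_pmf.prob (pmf_of_set (clauses n d)) (?agree p) \<le> ?b"
      using prob_clause_agrees_le[of "fst p" n "snd p" d] assms by auto
    thus "measure_pmf.prob ?P (?rows_equal p) \<le> ?b ^ m"
      unfolding random_cnf_def by (simp add: measure_Pi_pmf_Pi power_mono)
  qed
  also have "\<dots> \<le> 4 ^ n * ?b ^ m"
  proof -
    have "card ?pairs \<le> card (?A \<times> ?A)"
      using finite_assignments by (intro card_mono) auto
    also have "\<dots> = 4 ^ n"
      by (simp add: card_cartesian_product card_assignments flip: power_mult_distrib)
    finally have "real (card ?pairs) \<le> 4 ^ n"
      using of_nat_mono by fastforce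
    moreover have "0 \<le> ?b"
      using assms mult_mono[of "real d" "real n" 1 "2 ^ d"] by simp
    ultimately show ?thesis
      unfolding sum_constant by (intro mult_right_mono) simp_all
  qed
  finally show ?thesis .
qed

lemma prob_rows_distinct_ge:
  assumes "1 \<le> d" "d \<le> n" "real m \<ge> c * 2 ^ d * real n ^ 2 / real d"
  shows "measure_pmf.prob (random_cnf m n d) {F. rows_distinct n m F} \<ge> 1 - (4 * exp (- c)) ^ n"
proof -
  define x where "x = real d / (real n * 2 ^ d)"
  have "c * real n \<le> x * real m"
    using assms by (simp add: x_def field_simps power2_eq_square)
  have "x \<le> 1"
    using assms(1,2) mult_mono[of "real d" "real n" 1 "2 ^ d"] by (simp add: x_def)
  hence "(1 - x) ^ m \<le> exp (- x) ^ m"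
    using exp_minus_ge[of x] by (intro power_mono) auto
  also have "\<dots> \<le> exp (- c) ^ n"
    using \<open>c * real n \<le> x * real m\<close> by (simp flip: exp_of_nat_mult add: mult.commute)
  finally have "4 ^ n * (1 - x) ^ m \<le> (4 * exp (- c)) ^ n"
    by (simp add: power_mult_distrib)
  hence "measure_pmf.prob (random_cnf m n d) {F. \<not> rows_distinct n m F} \<le> (4 * exp (- c)) ^ n"
    using prob_not_rows_distinct_le[OF assms(1,2), of m] unfolding x_def by linarith
  moreover have "measure_pmf.prob (random_cnf m n d) {F. \<not> rows_distinct n m F}
      = 1 - measure_pmf.prob (random_cnf m n d) {F. rows_distinct n m F}"
    using measure_pmf.prob_compl[of "{F. rows_distinct n m F}" "random_cnf m n d"]
    by (simp add: Compl_eq_Diff_UNIV[symmetric] Collect_neg_eq[symmetric])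
  ultimately show ?thesis by linarith
qed

lemma two_div_log2_e: "2 / log 2 (exp 1) = ln 4"
  using ln_realpow[of 2 2] by (simp add: log_def)

theorem mainTheorem8:
  fixes d :: nat and c :: real and m :: "nat \<Rightarrow> nat"
  assumes "d \<ge> 1"
    and "c > 2 / log 2 (exp 1)"
    and "\<And>n. real (m n) \<ge> c * 2 ^ d * real n ^ 2 / real d"
  shows "(\<lambda>n. measure_pmf.prob (random_cnf (m n) n d) {F. rows_distinct n (m n) F})
           \<longlonglongrightarrow> 1"
proof -
  let ?q = "4 * exp (- c)"
  have "exp (- c) < exp (- ln 4)"
    using assms(2) unfolding two_div_log2_e by simp
  hence "?q < 1" by (simp add: exp_minus)
  hence "(\<lambda>n. 1 - ?q ^ n) \<longlonglongrightarrow> 1"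
    using tendsto_diff[OF tendsto_const LIMSEQ_power_zero[of ?q]] by simp
  moreover have "\<forall>\<^sub>F n in sequentially.
      1 - ?q ^ n \<le> measure_pmf.prob (random_cnf (m n) n d) {F. rows_distinct n (m n) F}"
    using eventually_ge_at_top[of d]
    by eventually_elim (rule prob_rows_distinct_ge[OF assms(1) _ assms(3)])
  moreover have "\<forall>\<^sub>F n in sequentially.
      measure_pmf.prob (random_cnf (m n) n d) {F. rows_distinct n (m n) F} \<le> 1"
    by simp
  ultimately show ?thesis
    by (rule tendsto_sandwich[OF _ _ _ tendsto_const, rotated 2])
qed

end
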